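(* An SVN $\mathfrak{g}$ with sufficient storage and sufficient budget under the Single-Objective Framework is bilaterally stable if and only if every agent has backup partnerships with all other agents, i.e. $\mathfrak{g}$ is the complete network.
   Context: $\mathfrak{g}$ is a simple undirected graph on $N$ agents, and $\eta_i(\mathfrak{g})$ is the degree of $i$. The utility is $u_i(\mathfrak{g})=\beta(1-\lambda^{\eta_i(\mathfrak{g})})$ with $\beta,\lambda\in(0,1)$. Sufficient resources means: - agent $i$'s storage $s_i$ satisfies $s_i\ge\sum_{j\ne i}d_j$, where $d_j$ is agent $j$'s data size; - budget $b_i\ge c(N-1)$, where $c$ is the per-link cost. Remaining storage is $RS_i=s_i-\sum_{j\text{ neighbour of }i}d_j$ and remaining budget is $RB_i=b_i-c\,\eta_i(\mathfrak{g})$. $\mathfrak{g}$ is bilaterally stable if both of the following hold. 1. For every link $\langle ij\rangle$: if $u_i(\mathfrak{g}-\langle ij\rangle)>u_i(\mathfrak{g})$, then $u_j(\mathfrak{g}-\langle ij\rangle)<u_j(\mathfrak{g})$. 2. For every non-link $\langle ij\rangle$: if $u_i(\mathfrak{g}+\langle ij\rangle)>u_i(\mathfrak{g})$ and $RS_j\ge d_i$ and $RB_i\ge c$, then $u_j(\mathfrak{g}+\langle ij\rangle)<u_j(\mathfrak{g})$ or $RS_i<d_j$ or $RB_j<c$. *)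

theory Defs
  imports Main "HOL.Real"
begin

definition simple_graph :: "'a set \<Rightarrow> ('a \<Rightarrow> 'a \<Rightarrow> bool) \<Rightarrow> bool" where
  "simple_graph V E \<longleftrightarrow> finite V \<and> (\<forall>i j. E i j \<longrightarrow> E j i)
     \<and> (\<forall>i. \<not> E i i) \<and> (\<forall>i j. E i j \<longrightarrow> i \<in> V \<and> j \<in> V)"

definition neighbours :: "'a set \<Rightarrow> ('a \<Rightarrow> 'a \<Rightarrow> bool) \<Rightarrow> 'a \<Rightarrow> 'a set" where
  "neighbours V E i = {j \<in> V. E i j}"

definition degree :: "'a set \<Rightarrow> ('a \<Rightarrow> 'a \<Rightarrow> bool) \<Rightarrow> 'a \<Rightarrow> nat" where
  "degree V E i = card (neighbours V E i)"

definition add_link :: "('a \<Rightarrow> 'a \<Rightarrow> bool) \<Rightarrow> 'a \<Rightarrow> 'a \<Rightarrow> ('a \<Rightarrow> 'a \<Rightarrow> bool)" where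
  "add_link E i j = (\<lambda>x y. E x y \<or> (x = i \<and> y = j) \<or> (x = j \<and> y = i))"

definition del_link :: "('a \<Rightarrow> 'a \<Rightarrow> bool) \<Rightarrow> 'a \<Rightarrow> 'a \<Rightarrow> ('a \<Rightarrow> 'a \<Rightarrow> bool)" where
  "del_link E i j = (\<lambda>x y. E x y \<and> \<not> (x = i \<and> y = j) \<and> \<not> (x = j \<and> y = i))"

definition utility :: "real \<Rightarrow> real \<Rightarrow> 'a set \<Rightarrow> ('a \<Rightarrow> 'a \<Rightarrow> bool) \<Rightarrow> 'a \<Rightarrow> real" where
  "utility bet lam V E i = bet * (1 - lam ^ degree V E i)"

definition rem_storage :: "('a \<Rightarrow> real) \<Rightarrow> ('a \<Rightarrow> real) \<Rightarrow> 'a set \<Rightarrow> ('a \<Rightarrow> 'a \<Rightarrow> bool) \<Rightarrow> 'a \<Rightarrow> real" where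
  "rem_storage s d V E i = s i - (\<Sum>j\<in>neighbours V E i. d j)"

definition rem_budget :: "('a \<Rightarrow> real) \<Rightarrow> real \<Rightarrow> 'a set \<Rightarrow> ('a \<Rightarrow> 'a \<Rightarrow> bool) \<Rightarrow> 'a \<Rightarrow> real" where
  "rem_budget b c V E i = b i - c * real (degree V E i)"

definition bilaterally_stable ::
  "real \<Rightarrow> real \<Rightarrow> ('a \<Rightarrow> real) \<Rightarrow> ('a \<Rightarrow> real) \<Rightarrow> ('a \<Rightarrow> real) \<Rightarrow> real
    \<Rightarrow> 'a set \<Rightarrow> ('a \<Rightarrow> 'a \<Rightarrow> bool) \<Rightarrow> bool" where
  "bilaterally_stable bet lam s d b c V E \<longleftrightarrow>
     (\<forall>i\<in>V. \<forall>j\<in>V. E i j \<longrightarrow>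
        utility bet lam V (del_link E i j) i > utility bet lam V E i \<longrightarrow>
        utility bet lam V (del_link E i j) j < utility bet lam V E j)
   \<and> (\<forall>i\<in>V. \<forall>j\<in>V. i \<noteq> j \<longrightarrow> \<not> E i j \<longrightarrow>
        (utility bet lam V (add_link E i j) i > utility bet lam V E i
         \<and> rem_storage s d V E j \<ge> d i \<and> rem_budget b c V E i \<ge> c) \<longrightarrow>
        (utility bet lam V (add_link E i j) j < utility bet lam V E j
         \<or> rem_storage s d V E i < d j \<or> rem_budget b c V E j < c))"

definition complete_network :: "'a set \<Rightarrow> ('a \<Rightarrow> 'a \<Rightarrow> bool) \<Rightarrow> bool" where
  "complete_network V E \<longleftrightarrow> (\<forall>i\<in>V. \<forall>j\<in>V. i \<noteq> j \<longrightarrow> E i j)"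

end

theory Submission
  imports Defs
begin

text \<open>Utility strictly increases with degree, so every agent wants every missing link and
  never wants to drop one. With sufficient resources the storage and budget side conditions
  always hold for a missing link, hence a missing link can always be added to mutual benefit:
  stability forces completeness. Conversely, in the complete network no link is missing and
  no deletion is profitable.\<close>

lemma finite_neighbours: "simple_graph V E \<Longrightarrow> finite (neighbours V E i)"
  by (auto simp: simple_graph_def neighbours_def)

lemma neighbours_subset: "simple_graph V E \<Longrightarrow> neighbours V E i \<subseteq> V - {i}"
  by (auto simp: simple_graph_def neighbours_def)

lemma add_link_commute: "add_link E i j = add_link E j i"
  by (auto simp: add_link_def fun_eq_iff)

lemma degree_add_link:
  assumes "simple_graph V E" "i \<in> V" "j \<in> V" "i \<noteq> j" "\<not> E i j"
  shows "degree V (add_link E i j) i = Suc (degree V E i)"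
proof -
  have "neighbours V (add_link E i j) i = insert j (neighbours V E i)"
    using assms by (auto simp: neighbours_def add_link_def)
  moreover have "j \<notin> neighbours V E i" using assms by (simp add: neighbours_def)
  ultimately show ?thesis using finite_neighbours[OF assms(1)] by (simp add: degree_def)
qed

lemma degree_del_link:
  assumes "simple_graph V E" "i \<in> V" "j \<in> V" "E i j"
  shows "degree V E i = Suc (degree V (del_link E i j) i)"
proof -
  have "neighbours V (del_link E i j) i = neighbours V E i - {j}"
    using assms by (auto simp: neighbours_def del_link_def)
  moreover have "j \<in> neighbours V E i" using assms by (simp add: neighbours_def)
  ultimately show ?thesis
    using card_Suc_Diff1[OF finite_neighbours[OF assms(1)]] by (simp add: degree_def)
qed

lemma utility_less_iff_degree_less:
  assumes "0 < bet" "0 < lam" "lam < 1"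
  shows "utility bet lam V E i < utility bet lam V' E' j \<longleftrightarrow> degree V E i < degree V' E' j"
  using assms by (simp add: utility_def power_strict_decreasing_iff)

lemma utility_add_link_gt:
  assumes "simple_graph V E" "0 < bet" "0 < lam" "lam < 1"
    and "i \<in> V" "j \<in> V" "i \<noteq> j" "\<not> E i j"
  shows "utility bet lam V E i < utility bet lam V (add_link E i j) i"
  using assms degree_add_link[of V E i j] by (simp add: utility_less_iff_degree_less)

lemma utility_del_link_less:
  assumes "simple_graph V E" "0 < bet" "0 < lam" "lam < 1"
    and "i \<in> V" "j \<in> V" "E i j"
  shows "utility bet lam V (del_link E i j) i < utility bet lam V E i"
  using assms degree_del_link[of V E i j] by (simp add: utility_less_iff_degree_less)

lemma rem_storage_ge_data:
  assumes "simple_graph V E" "\<forall>k\<in>V. 0 \<le> d k" "s j \<ge> (\<Sum>k\<in>V - {j}. d k)"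
    and "i \<in> V" "i \<noteq> j" "\<not> E j i"
  shows "d i \<le> rem_storage s d V E j"
proof -
  let ?N = "neighbours V E j"
  have fin: "finite V" using assms(1) by (simp add: simple_graph_def)
  have sub: "?N \<subseteq> V - {j}" using neighbours_subset[OF assms(1)] .
  have "d i \<le> (\<Sum>k\<in>V - {j} - ?N. d k)"
    using assms fin by (intro member_le_sum) (auto simp: neighbours_def)
  also have "\<dots> = (\<Sum>k\<in>V - {j}. d k) - (\<Sum>k\<in>?N. d k)"
    using fin sub by (simp add: sum_diff)
  finally show ?thesis using assms(3) by (simp add: rem_storage_def)
qed

lemma rem_budget_ge_cost:
  assumes "simple_graph V E" "0 \<le> c" "b i \<ge> c * (real (card V) - 1)"
    and "i \<in> V" "j \<in> V" "i \<noteq> j" "\<not> E i j"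
  shows "c \<le> rem_budget b c V E i"
proof -
  have fin: "finite V" using assms(1) by (simp add: simple_graph_def)
  have "neighbours V E i \<subseteq> V - {i, j}"
    using neighbours_subset[OF assms(1)] assms by (auto simp: neighbours_def)
  hence "degree V E i \<le> card (V - {i, j})"
    unfolding degree_def using fin by (intro card_mono) auto
  also have "\<dots> = card V - 2" using assms fin by (simp add: card_Diff_subset)
  finally have "real (degree V E i) \<le> real (card V) - 1 - 1"
    using assms(4-6) card_mono[OF fin, of "{i, j}"] by auto
  hence "c * real (degree V E i) \<le> c * (real (card V) - 1) - c"
    using mult_left_mono[OF _ assms(2)] by (fastforce simp: algebra_simps)
  thus ?thesis using assms(3) by (simp add: rem_budget_def)
qed

theorem corollary2:
  fixes V :: "'a set" and E :: "'a \<Rightarrow> 'a \<Rightarrow> bool"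
    and bet lam c :: real and s d b :: "'a \<Rightarrow> real"
  assumes graph: "simple_graph V E"
    and beta: "0 < bet" "bet < 1"
    and lambda: "0 < lam" "lam < 1"
    and cost: "0 \<le> c"
    and data: "\<forall>j\<in>V. 0 \<le> d j"
    and storage: "\<forall>i\<in>V. s i \<ge> (\<Sum>j\<in>V - {i}. d j)"
    and budget: "\<forall>i\<in>V. b i \<ge> c * (real (card V) - 1)"
  shows "bilaterally_stable bet lam s d b c V E \<longleftrightarrow> complete_network V E"
proof
  assume stable: "bilaterally_stable bet lam s d b c V E"
  have sym: "E i j \<longleftrightarrow> E j i" for i j using graph by (auto simp: simple_graph_def)
  show "complete_network V E" unfolding complete_network_def
  proof (intro ballI impI, rule ccontr)
    fix i j assume ij: "i \<in> V" "j \<in> V" "i \<noteq> j" "\<not> E i j"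
    then have ji: "\<not> E j i" using sym by blast
    have "utility bet lam V E i < utility bet lam V (add_link E i j) i"
      "d i \<le> rem_storage s d V E j" "c \<le> rem_budget b c V E i"
      using ij ji utility_add_link_gt[OF graph beta(1) lambda] storage budget
        rem_storage_ge_data[OF graph data] rem_budget_ge_cost[OF graph cost] by auto
    moreover have "utility bet lam V E j < utility bet lam V (add_link E i j) j"
      "d j \<le> rem_storage s d V E i" "c \<le> rem_budget b c V E j"
      using ij ji utility_add_link_gt[OF graph beta(1) lambda, of j i] add_link_commute[of E]
        storage budget rem_storage_ge_data[OF graph data] rem_budget_ge_cost[OF graph cost]
      by auto
    ultimately show False
      using stable ij unfolding bilaterally_stable_def by fastforce
  qed
next
  assume "complete_network V E"
  then show "bilaterally_stable bet lam s d b c V E"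
    using utility_del_link_less[OF graph beta(1) lambda]
    unfolding bilaterally_stable_def complete_network_def by force
qed

end
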